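(* Let $X$ be an arbitrary set and $P\subseteq X\times X$ a binary relation, and let $Q=\{(x,y)\in X\times X:(y,x)\notin P\}$. Then $P$ is complete and negatively transitive if and only if there is a family $\mathcal V$ of functions $v:X\to\mathbb R$ such that for all $x,y\in X$: $(x,y)\in Q$ if and only if $v(x)\geq v(y)$ for all $v\in\mathcal V$ and $v(x)>v(y)$ for some $v\in\mathcal V$ (i.e. $P$ is embeddable in $\mathbb R^{\mathcal V}$ with the Pareto order).
   Context: $P$ is complete if for all $x,y$, $(x,y)\in P$ or $(y,x)\in P$; negatively transitive if $(x,y)\notin P$ and $(y,z)\notin P$ imply $(x,z)\notin P$. The Pareto order on $\mathbb R^I$: $(x_\alpha)\succ(y_\alpha)$ iff $x_\alpha\geq y_\alpha$ for all $\alpha\in I$ and $x_\alpha>y_\alpha$ for some $\alpha\in I$; $x\succeq y$ means not $y\succ x$. *)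

theory Defs
  imports Complex_Main
begin

definition complete_on :: "'a set \<Rightarrow> ('a \<times> 'a) set \<Rightarrow> bool" where
  "complete_on X P \<longleftrightarrow> (\<forall>x\<in>X. \<forall>y\<in>X. (x, y) \<in> P \<or> (y, x) \<in> P)"

definition negatively_transitive_on :: "'a set \<Rightarrow> ('a \<times> 'a) set \<Rightarrow> bool" where
  "negatively_transitive_on X P \<longleftrightarrow>
     (\<forall>x\<in>X. \<forall>y\<in>X. \<forall>z\<in>X. (x, y) \<notin> P \<longrightarrow> (y, z) \<notin> P \<longrightarrow> (x, z) \<notin> P)"

end

theory Submission
  imports Defs
begin

text \<open>The relation Q is the strict part of P: P is complete exactly when Q is asymmetric, and
negatively transitive exactly when Q is transitive. The Pareto order of any family is
asymmetric and transitive; conversely a strict partial order Q is induced by the family of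
indicator functions of the sets {z} \<union> {x. (x, z) \<in> Q}, one for each z \<in> X.\<close>

definition pareto_dominates :: "('a \<Rightarrow> 'b::linorder) set \<Rightarrow> 'a \<Rightarrow> 'a \<Rightarrow> bool" where
  "pareto_dominates V x y \<longleftrightarrow> (\<forall>v\<in>V. v y \<le> v x) \<and> (\<exists>v\<in>V. v y < v x)"

lemma pareto_dominates_asym:
  assumes "pareto_dominates V x y"
  shows "\<not> pareto_dominates V y x"
  using assms unfolding pareto_dominates_def by (meson not_le)

lemma pareto_dominates_trans:
  assumes "pareto_dominates V x y" and "pareto_dominates V y z"
  shows "pareto_dominates V x z"
  using assms unfolding pareto_dominates_def by (meson order_trans le_less_trans)

lemma pareto_representation_of_strict_partial_order:
  fixes R :: "'a rel"
  assumes irrefl: "irrefl_on X R" and trans: "trans_on X R"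
  defines "V \<equiv> (\<lambda>z x. of_bool (x = z \<or> (x, z) \<in> R)) ` X"
  assumes "x \<in> X" and "y \<in> X"
  shows "(x, y) \<in> R \<longleftrightarrow> pareto_dominates (V :: ('a \<Rightarrow> real) set) x y"
proof -
  define up :: "'a \<Rightarrow> 'a \<Rightarrow> real" where "up z x = of_bool (x = z \<or> (x, z) \<in> R)" for z x
  have V_eq: "V = up ` X"
    unfolding V_def up_def by (rule refl)
  show ?thesis
  proof
    assume xy: "(x, y) \<in> R"
    have asym: "asym_on X R"
      using asym_on_iff_irrefl_on_if_trans_on[OF trans] irrefl by blast
    have "up z y \<le> up z x" if "z \<in> X" for z
    proof -
      have "(y, z) \<in> R \<Longrightarrow> (x, z) \<in> R"
        using trans_onD[OF trans] xy \<open>x \<in> X\<close> \<open>y \<in> X\<close> \<open>z \<in> X\<close> by blast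
      then show ?thesis
        unfolding up_def using xy by auto
    qed
    moreover have "up x y < up x x"
      using xy irrefl_onD[OF irrefl] asym_onD[OF asym] \<open>x \<in> X\<close> \<open>y \<in> X\<close>
      unfolding up_def by auto
    ultimately show "pareto_dominates V x y"
      unfolding pareto_dominates_def V_eq using \<open>x \<in> X\<close> by blast
  next
    assume dom: "pareto_dominates V x y"
    then have "up y y \<le> up y x"
      unfolding pareto_dominates_def V_eq using \<open>y \<in> X\<close> by blast
    then have "x = y \<or> (x, y) \<in> R"
      unfolding up_def by (cases "x = y \<or> (x, y) \<in> R") simp_all
    moreover have "x \<noteq> y"
      using dom pareto_dominates_asym by metis
    ultimately show "(x, y) \<in> R"
      by blast
  qed
qed

lemma strict_partial_order_iff_pareto_representable:
  fixes R :: "'a rel"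
  shows "asym_on X R \<and> trans_on X R \<longleftrightarrow>
    (\<exists>V :: ('a \<Rightarrow> real) set. \<forall>x\<in>X. \<forall>y\<in>X. (x, y) \<in> R \<longleftrightarrow> pareto_dominates V x y)"
proof
  assume "asym_on X R \<and> trans_on X R"
  then have "irrefl_on X R" and "trans_on X R"
    by auto
  then show "\<exists>V :: ('a \<Rightarrow> real) set. \<forall>x\<in>X. \<forall>y\<in>X. (x, y) \<in> R \<longleftrightarrow> pareto_dominates V x y"
    by (intro exI ballI) (rule pareto_representation_of_strict_partial_order)
next
  assume "\<exists>V :: ('a \<Rightarrow> real) set. \<forall>x\<in>X. \<forall>y\<in>X. (x, y) \<in> R \<longleftrightarrow> pareto_dominates V x y"
  then obtain V :: "('a \<Rightarrow> real) set"
    where V: "\<And>x y. x \<in> X \<Longrightarrow> y \<in> X \<Longrightarrow> (x, y) \<in> R \<longleftrightarrow> pareto_dominates V x y"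
    by blast
  have "asym_on X R"
    by (meson V asym_onI pareto_dominates_asym)
  moreover have "trans_on X R"
    by (meson V trans_onI pareto_dominates_trans)
  ultimately show "asym_on X R \<and> trans_on X R" ..
qed

lemma complete_on_iff_asym_on_strict_part:
  "complete_on X P \<longleftrightarrow> asym_on X {(x, y). x \<in> X \<and> y \<in> X \<and> (y, x) \<notin> P}"
  unfolding complete_on_def asym_on_def by blast

lemma negatively_transitive_on_iff_trans_on_strict_part:
  "negatively_transitive_on X P \<longleftrightarrow> trans_on X {(x, y). x \<in> X \<and> y \<in> X \<and> (y, x) \<notin> P}"
  unfolding negatively_transitive_on_def trans_on_def by blast

theorem theorem10:
  fixes X :: "'a set" and P :: "('a \<times> 'a) set"
  assumes "P \<subseteq> X \<times> X"
  defines "Q \<equiv> {(x, y). x \<in> X \<and> y \<in> X \<and> (y, x) \<notin> P}"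
  shows "(complete_on X P \<and> negatively_transitive_on X P) \<longleftrightarrow>
    (\<exists>V :: ('a \<Rightarrow> real) set. \<forall>x\<in>X. \<forall>y\<in>X.
        (x, y) \<in> Q \<longleftrightarrow> ((\<forall>v\<in>V. v x \<ge> v y) \<and> (\<exists>v\<in>V. v x > v y)))"
  unfolding complete_on_iff_asym_on_strict_part negatively_transitive_on_iff_trans_on_strict_part
    strict_partial_order_iff_pareto_representable pareto_dominates_def Q_def ..

end
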